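(* For every integer $m\ge3$, $\{1,m\}\notin\mathcal{I}_1$; that is, there is no interval-filling summable sequence of positive reals whose cardinal function has range exactly $\{1,m\}$.
   Context: For a summable sequence $\mathbf{x}=(x_n)$ of positive reals, $\mathcal{A}(\mathbf{x})=\{\sum_{n\in A}x_n: A\subseteq\mathbb{N}\}$ is its achievement set and its cardinal function $f$ assigns to $x\in\mathcal{A}(\mathbf{x})$ the cardinality (a positive integer, $\omega$, or $\mathfrak{c}$) of $\{(\varepsilon_n)\in\{0,1\}^{\mathbb{N}}:\sum\varepsilon_nx_n=x\}$. A sequence is interval-filling if its achievement set is an interval. $\mathcal{I}_1$ is the family of ranges of cardinal functions of interval-filling sequences. *)

theory Defs
  imports "HOL-Analysis.Analysis"
begin

datatype cardval = FinCard nat | Omega | Continuum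

definition cardval_of :: "'a set \<Rightarrow> cardval" where
  "cardval_of S = (if finite S then FinCard (card S)
                   else if countable S then Omega else Continuum)"

text \<open>Subseries sum selected by A (A corresponds to a 0-1 sequence).\<close>
definition subsum :: "(nat \<Rightarrow> real) \<Rightarrow> nat set \<Rightarrow> real" where
  "subsum x A = (\<Sum>n. if n \<in> A then x n else 0)"

definition achievement_set :: "(nat \<Rightarrow> real) \<Rightarrow> real set" where
  "achievement_set x = {subsum x A | A. True}"

definition cardinal_function :: "(nat \<Rightarrow> real) \<Rightarrow> real \<Rightarrow> cardval" where
  "cardinal_function x t = cardval_of {A :: nat set. subsum x A = t}"

definition interval_filling :: "(nat \<Rightarrow> real) \<Rightarrow> bool" where
  "interval_filling x \<longleftrightarrow> is_interval (achievement_set x)"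

end

theory Submission
  imports Defs
begin

text \<open>Since the terms are positive, subsums are strictly monotone in the index set. By
  interval-filling and compactness, every term x k also has a representation avoiding k, so
  each term has exactly m representations. Take a largest term x p and a representation B of
  x p avoiding p. If B is the whole complement of p, then {p} and B are the only
  representations of x p, contradicting m \<ge> 3. Otherwise some index k \<notin> B has x k < x p
  (after replacing B by {q} if a term x q outside B equals x p). Then x k + x p has at least
  m + 1 representations, namely D \<union> {p} for each of the m representations D of x k, and
  {k} \<union> B, although it must have 1 or m.\<close>

definition representations :: "(nat \<Rightarrow> real) \<Rightarrow> real \<Rightarrow> nat set set" where
  "representations x t = {A. subsum x A = t}"

lemma cardval_of_eq_FinCard_iff: "cardval_of S = FinCard n \<longleftrightarrow> finite S \<and> card S = n"
  by (simp add: cardval_of_def)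

lemma subsum_singleton: "subsum x {j} = x j"
proof -
  have "(\<lambda>n. if n \<in> {j} then x n else 0) = (\<lambda>n. if n = j then x n else 0)"
    by auto
  then show ?thesis
    unfolding subsum_def using sums_single[of j x] sums_unique by metis
qed

lemma subsum_empty [simp]: "subsum x {} = 0"
  by (simp add: subsum_def)

lemma subsum_in_achievement_set [simp]: "subsum x A \<in> achievement_set x"
  unfolding achievement_set_def by blast

lemma term_in_achievement_set [simp]: "x k \<in> achievement_set x"
  using subsum_in_achievement_set[of x "{k}"] by (simp add: subsum_singleton)

lemma finite_card_representations_if_range:
  assumes "cardinal_function x ` achievement_set x \<subseteq> FinCard ` N" "t \<in> achievement_set x"
  shows "finite (representations x t) \<and> card (representations x t) \<in> N"
proof -
  obtain n where "n \<in> N" "cardval_of (representations x t) = FinCard n"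
    using assms unfolding cardinal_function_def representations_def by blast
  then show ?thesis
    by (simp add: cardval_of_eq_FinCard_iff)
qed

locale positive_summable =
  fixes x :: "nat \<Rightarrow> real"
  assumes pos: "\<And>n. 0 < x n"
    and summable_seq: "summable x"
begin

lemma summable_restrict: "summable (\<lambda>n. if n \<in> A then x n else 0)"
  by (rule summable_comparison_test'[OF summable_seq, of 0]) (use pos in \<open>auto simp: less_imp_le\<close>)

lemma subsum_Un_disjoint:
  assumes "A \<inter> B = {}"
  shows "subsum x (A \<union> B) = subsum x A + subsum x B"
  unfolding subsum_def suminf_add[OF summable_restrict summable_restrict]
  using assms by (intro arg_cong[where f = suminf] ext) auto

lemma subsum_insert: "p \<notin> A \<Longrightarrow> subsum x (insert p A) = x p + subsum x A"
  using subsum_Un_disjoint[of "{p}" A] by (simp add: subsum_singleton)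

lemma subsum_nonneg: "0 \<le> subsum x A"
  unfolding subsum_def
  by (rule suminf_nonneg[OF summable_restrict]) (use pos in \<open>auto simp: less_imp_le\<close>)

lemma subsum_pos: "j \<in> A \<Longrightarrow> 0 < subsum x A"
  unfolding subsum_def
  by (rule suminf_pos2[OF summable_restrict, where i = j]) (use pos in \<open>auto simp: less_imp_le\<close>)

lemma subsum_strict_mono:
  assumes "A \<subset> B"
  shows "subsum x A < subsum x B"
proof -
  obtain j where "j \<in> B - A"
    using assms by auto
  moreover have "subsum x B = subsum x A + subsum x (B - A)"
    using subsum_Un_disjoint[of A "B - A"] assms by (simp add: Un_Diff_cancel2 sup.absorb2)
  ultimately show ?thesis
    using subsum_pos[of j "B - A"] by simp
qed

lemma subsum_mono: "A \<subseteq> B \<Longrightarrow> subsum x A \<le> subsum x B"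
  using subsum_strict_mono[of A B] by (cases "A = B") (auto simp: psubset_eq)

lemma term_le_subsum: "j \<in> A \<Longrightarrow> x j \<le> subsum x A"
  using subsum_mono[of "{j}" A] by (simp add: subsum_singleton)

text \<open>The subsums over subsets of C are the image of the compact space of 0-1 sequences
  vanishing off C under the map e \<mapsto> \<Sum>n. e n * x n, which is continuous by the
  Weierstrass M-test.\<close>
lemma compact_subsums_within: "compact {subsum x A | A. A \<subseteq> C}"
proof -
  define K where "K = PiE UNIV (\<lambda>n. if n \<in> C then {0, 1} else {0 :: real})"
  define h where "h = (\<lambda>e. \<Sum>n. e n * x n)"
  have "compactin (product_topology (\<lambda>_. euclidean) UNIV) K"
    unfolding K_def by (subst compactin_PiE) auto
  then have "compact K"
    by (simp add: euclidean_product_topology)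
  have K_values: "e n \<in> (if n \<in> C then {0, 1} else {0})" if "e \<in> K" for e n
    using that unfolding K_def by blast
  have "norm (e n * x n) \<le> x n" if "e \<in> K" for e n
    using K_values[OF that, of n] pos[of n] by (auto split: if_splits)
  then have "uniform_limit K (\<lambda>N e. \<Sum>n<N. e n * x n) h sequentially"
    unfolding h_def by (rule Weierstrass_m_test[OF _ summable_seq])
  then have "continuous_on K h"
    by (rule uniform_limit_theorem[rotated], simp,
        intro always_eventually allI continuous_intros
          continuous_on_subset[OF continuous_on_product_coordinates], auto)
  then have "compact (h ` K)"
    using \<open>compact K\<close> by (rule compact_continuous_image)
  moreover have "h ` K = {subsum x A | A. A \<subseteq> C}"
  proof (intro equalityI subsetI)
    fix t assume "t \<in> h ` K"
    then obtain e where e: "e \<in> K" "t = h e"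
      by blast
    have "e n = 0 \<or> e n = 1" for n
      using K_values[OF e(1), of n] by (auto split: if_splits)
    then have "t = subsum x {n. e n = 1}"
      unfolding e(2) h_def subsum_def by (intro arg_cong[where f = suminf] ext) force
    moreover have "{n. e n = 1} \<subseteq> C"
      using K_values[OF e(1)] by (force split: if_splits)
    ultimately show "t \<in> {subsum x A | A. A \<subseteq> C}"
      by blast
  next
    fix t assume "t \<in> {subsum x A | A. A \<subseteq> C}"
    then obtain A where A: "A \<subseteq> C" "t = subsum x A"
      by blast
    define e where "e = (\<lambda>n. if n \<in> A then 1 else 0 :: real)"
    have "e \<in> K"
      using A(1) unfolding K_def e_def by auto
    moreover have "t = h e"
      unfolding A(2) h_def subsum_def e_def by (intro arg_cong[where f = suminf]) auto
    ultimately show "t \<in> h ` K"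
      by blast
  qed
  ultimately show ?thesis
    by simp
qed

lemma achievement_set_eq_interval:
  assumes "interval_filling x"
  shows "achievement_set x = {0..subsum x UNIV}"
proof
  show "achievement_set x \<subseteq> {0..subsum x UNIV}"
    unfolding achievement_set_def using subsum_nonneg subsum_mono[OF subset_UNIV] by auto
  have "0 \<in> achievement_set x" "subsum x UNIV \<in> achievement_set x"
    using subsum_in_achievement_set[of x "{}"] by simp_all
  with assms show "{0..subsum x UNIV} \<subseteq> achievement_set x"
    unfolding interval_filling_def atLeastAtMost_def atLeast_def atMost_def
    by (blast intro: mem_is_interval_1_I)
qed

text \<open>Every subsum below x k avoids k, and these subsums fill [0, x k); since the subsums
  avoiding k form a closed set, they also reach x k itself.\<close>
lemma term_eq_subsum_avoiding:
  assumes "interval_filling x"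
  obtains D where "k \<notin> D" "subsum x D = x k"
proof -
  define R where "R = {subsum x A | A. A \<subseteq> - {k}}"
  have "{0..<x k} \<subseteq> R"
  proof
    fix t assume t: "t \<in> {0..<x k}"
    moreover have "x k \<le> subsum x UNIV"
      by (simp add: term_le_subsum)
    ultimately have "t \<in> achievement_set x"
      using achievement_set_eq_interval[OF assms] by simp
    then obtain E where E: "t = subsum x E"
      unfolding achievement_set_def by blast
    then have "k \<notin> E"
      using term_le_subsum[of k E] t by auto
    then show "t \<in> R"
      unfolding R_def using E by auto
  qed
  then have "closure {0..<x k} \<subseteq> R"
    unfolding R_def by (intro closure_minimal compact_imp_closed compact_subsums_within)
  moreover have "x k \<in> closure {0..<x k}"
    using pos[of k] by simp
  ultimately have "x k \<in> R"
    by blast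
  then obtain D where "D \<subseteq> - {k}" "subsum x D = x k"
    unfolding R_def by auto
  then show ?thesis
    using that by blast
qed

lemma exists_max_term:
  obtains p where "\<And>n. x n \<le> x p"
proof -
  define P where "P = {n. x 0 \<le> x n}"
  have "\<forall>\<^sub>F n in sequentially. x n < x 0"
    using summable_LIMSEQ_zero[OF summable_seq] pos[of 0] by (rule order_tendstoD)
  then have "finite P"
    unfolding P_def by (simp add: cofinite_eq_sequentially[symmetric] eventually_cofinite not_less)
  moreover have "0 \<in> P"
    unfolding P_def by simp
  ultimately have "Max (x ` P) \<in> x ` P"
    by (intro Max_in) auto
  then obtain p where p: "p \<in> P" "x p = Max (x ` P)"
    by (auto simp del: Max_in)
  have "x n \<le> x p" for n
  proof (cases "n \<in> P")
    case True
    then show ?thesis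
      using p(2) \<open>finite P\<close> by simp
  next
    case False
    then have "x n < x 0"
      unfolding P_def by simp
    also have "x 0 \<le> x p"
      using p(1) unfolding P_def by simp
    finally show ?thesis
      by simp
  qed
  then show ?thesis
    using that by blast
qed

lemma exists_smaller_term_outside:
  assumes "finite Z" "0 < c"
  obtains k where "k \<notin> Z" "x k < c"
proof -
  have "\<forall>\<^sub>F n in sequentially. x n < c"
    using summable_LIMSEQ_zero[OF summable_seq] assms(2) by (rule order_tendstoD)
  moreover have "\<forall>\<^sub>F n in sequentially. n \<notin> Z"
    using assms(1) by (simp add: cofinite_eq_sequentially[symmetric] eventually_cofinite)
  ultimately have "\<forall>\<^sub>F n in sequentially. n \<notin> Z \<and> x n < c"
    by eventually_elim simp
  then show ?thesis
    using that eventually_happens'[OF sequentially_bot] by blast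
qed

lemma two_le_card_representations_term:
  assumes "interval_filling x" "finite (representations x (x k))"
  shows "2 \<le> card (representations x (x k))"
proof -
  obtain D where D: "k \<notin> D" "subsum x D = x k"
    using term_eq_subsum_avoiding[OF assms(1)] .
  then have "{{k}, D} \<subseteq> representations x (x k)"
    by (simp add: representations_def subsum_singleton)
  moreover have "card {{k}, D} = 2"
    using D(1) by (simp add: card_insert_if) blast
  ultimately show ?thesis
    using card_mono[OF assms(2)] by metis
qed

lemma card_representations_term_le_2:
  assumes "subsum x (- {p}) = x p"
  shows "card (representations x (x p)) \<le> 2"
proof -
  have "representations x (x p) \<subseteq> {{p}, - {p}}"
  proof
    fix D assume "D \<in> representations x (x p)"
    then have D: "subsum x D = x p"
      by (simp add: representations_def)
    show "D \<in> {{p}, - {p}}"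
    proof (cases "p \<in> D")
      case True
      then have "\<not> {p} \<subset> D"
        using subsum_strict_mono[of "{p}" D] D by (auto simp: subsum_singleton)
      with True show ?thesis
        by auto
    next
      case False
      then have "\<not> D \<subset> - {p}"
        using subsum_strict_mono[of D "- {p}"] D assms by auto
      with False show ?thesis
        by auto
    qed
  qed
  then have "card (representations x (x p)) \<le> card {{p}, - {p} :: nat set}"
    by (rule card_mono[rotated]) simp
  also have "\<dots> \<le> 2"
    by (rule card_insert_le_m1) simp_all
  finally show ?thesis .
qed

text \<open>Adding a term p larger than t to the representations of t gives representations of
  t + x p that all contain p; gluing a representation of t to one of x p that avoids p
  gives one more.\<close>
lemma card_representations_less_add_term:
  assumes "t < x p"
    and B: "p \<notin> B" "subsum x B = x p"
    and E: "E \<in> representations x t" "E \<inter> B = {}"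
    and fin: "finite (representations x (t + x p))"
  shows "card (representations x t) < card (representations x (t + x p))"
proof -
  have avoid: "p \<notin> D" if "D \<in> representations x t" for D
    using that term_le_subsum[of p D] \<open>t < x p\<close> by (auto simp: representations_def)
  have "insert p ` representations x t \<subseteq> representations x (t + x p)"
    using avoid by (auto simp: representations_def subsum_insert)
  moreover have "E \<union> B \<in> representations x (t + x p)"
    using E B by (simp add: representations_def subsum_Un_disjoint)
  moreover have "E \<union> B \<notin> insert p ` representations x t"
    using B(1) avoid[OF E(1)] by auto
  ultimately have "insert (E \<union> B) (insert p ` representations x t) \<subseteq> representations x (t + x p)"
    by blast
  then have "card (insert (E \<union> B) (insert p ` representations x t)) \<le> card (representations x (t + x p))"
    using fin by (rule card_mono[rotated])
  moreover have "finite (insert p ` representations x t)"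
    using \<open>insert p ` _ \<subseteq> _\<close> fin by (rule finite_subset)
  moreover have "inj_on (insert p) (representations x t)"
    using avoid by (intro inj_onI) (metis insert_ident)
  ultimately show ?thesis
    using \<open>E \<union> B \<notin> _\<close> by (simp add: card_image)
qed

lemma max_term_cases:
  assumes max: "\<And>n. x n \<le> x p" and B: "p \<notin> B" "subsum x B = x p"
  obtains "subsum x (- {p}) = x p"
    | B' k where "p \<notin> B'" "subsum x B' = x p" "k \<notin> B'" "x k < x p"
proof (cases "B = - {p}")
  case True
  then show ?thesis
    using that(1) B by blast
next
  case False
  then obtain q where q: "q \<notin> B" "q \<noteq> p"
    using B(1) by blast
  show ?thesis
  proof (cases "x q < x p")
    case True
    then show ?thesis
      using that(2) B q by blast
  next
    case False
    then have "x q = x p"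
      using max[of q] by simp
    moreover obtain k where "k \<noteq> q" "x k < x p"
      using exists_smaller_term_outside[of "{q}" "x p"] pos[of p] by blast
    ultimately show ?thesis
      using that(2)[of "{q}" k] q by (simp add: subsum_singleton)
  qed
qed

end

theorem theorem3p6:
  fixes m :: nat
  assumes "m \<ge> 3"
  shows "\<not> (\<exists>x :: nat \<Rightarrow> real. (\<forall>n. x n > 0) \<and> summable x \<and> interval_filling x \<and>
            cardinal_function x ` achievement_set x = {FinCard 1, FinCard m})"
proof
  assume "\<exists>x :: nat \<Rightarrow> real. (\<forall>n. x n > 0) \<and> summable x \<and> interval_filling x \<and>
            cardinal_function x ` achievement_set x = {FinCard 1, FinCard m}"
  then obtain x :: "nat \<Rightarrow> real" where "\<forall>n. x n > 0" "summable x" and filling: "interval_filling x"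
    and range: "cardinal_function x ` achievement_set x = {FinCard 1, FinCard m}"
    by blast
  then interpret positive_summable x
    by unfold_locales auto
  have card_reps: "finite (representations x t) \<and> card (representations x t) \<in> {1, m}"
    if "t \<in> achievement_set x" for t
    using finite_card_representations_if_range[of x "{1, m}" t] range that by simp
  have card_term_reps: "card (representations x (x k)) = m" for k
    using two_le_card_representations_term[OF filling] card_reps[OF term_in_achievement_set]
    by fastforce
  obtain p where max: "\<And>n. x n \<le> x p"
    using exists_max_term by blast
  obtain B where B: "p \<notin> B" "subsum x B = x p"
    using term_eq_subsum_avoiding[OF filling] .
  show False
  proof (rule max_term_cases[OF max B])
    assume "subsum x (- {p}) = x p"
    then show False
      using card_representations_term_le_2 card_term_reps[of p] assms by fastforce
  next
    fix B' k
    assume B': "p \<notin> B'" "subsum x B' = x p" and k: "k \<notin> B'" "x k < x p"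
    then have "x k + x p \<in> achievement_set x"
      using subsum_in_achievement_set[of x "insert k B'"] by (simp add: subsum_insert)
    note sum_reps = card_reps[OF this]
    then have "card (representations x (x k)) < card (representations x (x k + x p))"
      using card_representations_less_add_term[OF k(2) B', of "{k}"] k(1)
      by (simp add: representations_def subsum_singleton)
    then show False
      using card_term_reps[of k] sum_reps assms by auto
  qed
qed

end
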